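(* Let $\varphi:\mathrm{WCQSym}\to\mathrm{QSym}$ be the $\mathbf k$-linear map with $\varphi(M_\alpha)=(-1)^{\ell_\varepsilon(\alpha)}M_{\bar\alpha}$ for $\alpha\in\mathcal C_N$ and $\varphi(M_\alpha)=0$ for $\alpha\in\mathcal C_\varepsilon$. Let $B_\varepsilon=\{M_\alpha:\alpha\in\mathcal C_\varepsilon\}$ and $B_N=\{M_\alpha+(-1)^{\ell_\varepsilon(\alpha)+1}M_{\bar\alpha}:\alpha\in\mathcal C_N\setminus\mathcal C(\mathbb N)\}$. Then the disjoint union $B_\varepsilon\uplus B_N$ is a basis of the free $\mathbf k$-module $\ker\varphi$.
   Context: $\mathbf{k}$ is a commutative ring containing $\mathbb{Q}$. $\tilde{\mathbb N}=\mathbb N\cup\{\varepsilon\}$ with $0+\varepsilon=\varepsilon+\varepsilon=\varepsilon$ and $n+\varepsilon=n$ for integers $n\ge1$. $\mathbf{k}[[X]]_{\tilde{\mathbb N}}$, $X=\{x_1<x_2<\cdots\}$, is the algebra of possibly infinite linear combinations of formal monomials $\prod x_i^{f(x_i)}$, $f$ finitely supported $\tilde{\mathbb N}$-valued, multiplied by adding exponents in $\tilde{\mathbb N}$. An $\tilde{\mathbb N}$-composition is a finite (possibly empty) sequence $\alpha=(\alpha_1,\dots,\alpha_k)$ of elements of $\{\varepsilon,1,2,\dots\}$; $M_\alpha=\sum_{1\le i_1<\cdots<i_k}x_{i_1}^{\alpha_1}\cdots x_{i_k}^{\alpha_k}$, $M_\emptyset=1$. $\mathrm{WCQSym}$ is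 the $\mathbf k$-span of the (linearly independent) $M_\alpha$. $\mathcal C(\mathbb N)$ is the set of $\tilde{\mathbb N}$-compositions all of whose entries are positive integers, and $\mathrm{QSym}$ is the span of $M_\alpha$, $\alpha\in\mathcal C(\mathbb N)$. $\ell_\varepsilon(\alpha)$ is the number of entries of $\alpha$ equal to $\varepsilon$; $\bar\alpha$ is $\alpha$ with its $\varepsilon$ entries deleted. $\mathcal C_\varepsilon$ is the set of $\tilde{\mathbb N}$-compositions with first entry $\varepsilon$; $\mathcal C_N$ is the set of all others (including the empty one). *)

theory Defs
  imports Main "HOL.Modules" "HOL-Library.Poly_Mapping"
begin

text \<open>Entries of an N-tilde-composition: the symbol epsilon, or a positive integer
  (represented by the type num of positive binary numerals).\<close>
datatype wentry = Eps | Pos num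

type_synonym wcomp = "wentry list"

text \<open>Since the M_alpha are linearly independent, WCQSym is the free k-module with basis
  (M_alpha); we represent an element by its finitely supported coefficient function.\<close>
type_synonym 'k wcqsym = "wcomp \<Rightarrow>\<^sub>0 'k"

definition scaleW :: "'k::comm_ring_1 \<Rightarrow> 'k wcqsym \<Rightarrow> 'k wcqsym" where
  "scaleW c p = Poly_Mapping.map (\<lambda>x. c * x) p"

lemma lookup_scaleW: "Poly_Mapping.lookup (scaleW c p) a = c * Poly_Mapping.lookup p a"
  unfolding scaleW_def by (simp add: map.rep_eq when_def)

lemma module_scaleW: "module (scaleW :: 'k::comm_ring_1 \<Rightarrow> 'k wcqsym \<Rightarrow> 'k wcqsym)"
  by unfold_locales
     (auto intro!: poly_mapping_eqI simp: lookup_scaleW lookup_add algebra_simps)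

definition M :: "wcomp \<Rightarrow> 'k::comm_ring_1 wcqsym" where
  "M \<alpha> = Poly_Mapping.single \<alpha> 1"

definition CN_nat :: "wcomp set" where
  "CN_nat = {\<alpha>. Eps \<notin> set \<alpha>}"

definition C_eps :: "wcomp set" where
  "C_eps = {\<alpha>. \<alpha> \<noteq> [] \<and> hd \<alpha> = Eps}"

definition C_N :: "wcomp set" where
  "C_N = - C_eps"

definition ell_eps :: "wcomp \<Rightarrow> nat" where
  "ell_eps \<alpha> = length (filter (\<lambda>x. x = Eps) \<alpha>)"

definition bar :: "wcomp \<Rightarrow> wcomp" where
  "bar \<alpha> = filter (\<lambda>x. x \<noteq> Eps) \<alpha>"

definition phiM :: "wcomp \<Rightarrow> 'k::comm_ring_1 wcqsym" where
  "phiM \<alpha> = (if \<alpha> \<in> C_eps then 0 else scaleW ((-1) ^ ell_eps \<alpha>) (M (bar \<alpha>)))"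

definition phi :: "'k::comm_ring_1 wcqsym \<Rightarrow> 'k wcqsym" where
  "phi p = (\<Sum>\<alpha>\<in>Poly_Mapping.keys p. scaleW (Poly_Mapping.lookup p \<alpha>) (phiM \<alpha>))"

definition QSym :: "'k::comm_ring_1 wcqsym set" where
  "QSym = module.span scaleW (M ` CN_nat)"

definition bN :: "wcomp \<Rightarrow> 'k::comm_ring_1 wcqsym" where
  "bN \<alpha> = M \<alpha> + scaleW ((-1) ^ (ell_eps \<alpha> + 1)) (M (bar \<alpha>))"

definition B_eps :: "'k::comm_ring_1 wcqsym set" where
  "B_eps = M ` C_eps"

definition B_N :: "'k::comm_ring_1 wcqsym set" where
  "B_N = bN ` (C_N - CN_nat)"

end

theory Submission
  imports Defs
begin

text \<open>For a composition \<kappa> with an \<epsilon> entry let b(\<kappa>) be M(\<kappa>) if \<kappa> starts with \<epsilon>,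
  and bN \<kappa> otherwise; these are exactly the elements of B_eps and B_N. Since bar \<kappa> has
  no \<epsilon> entry, the coordinates of b(\<kappa>) at compositions with an \<epsilon> entry are those of
  M(\<kappa>). This unitriangularity gives linear independence; and for p in the kernel of \<phi>,
  subtracting the sum of p(\<kappa>) b(\<kappa>) over such \<kappa> leaves an element of QSym in the kernel,
  which vanishes because \<phi> is the identity on QSym.\<close>

interpretation W: module "scaleW :: 'k::comm_ring_1 \<Rightarrow> 'k wcqsym \<Rightarrow> 'k wcqsym"
  by (rule module_scaleW)

lemma lookup_M: "Poly_Mapping.lookup (M \<gamma> :: 'k::comm_ring_1 wcqsym) \<kappa> = (if \<gamma> = \<kappa> then 1 else 0)"
  by (simp add: M_def lookup_single when_def)

lemma lookup_sum_scaleW_delta: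
  fixes f :: "wcomp \<Rightarrow> 'k::comm_ring_1 wcqsym"
  assumes delta: "\<And>i. i \<in> A \<Longrightarrow> Poly_Mapping.lookup (f i) j = (if i = j then 1 else 0)"
    and "finite A"
  shows "Poly_Mapping.lookup (\<Sum>i\<in>A. scaleW (c i) (f i)) j = (if j \<in> A then c j else 0)"
  using assms by (simp add: lookup_sum lookup_scaleW if_distrib[of "\<lambda>x. _ * x"] cong: if_cong)

lemma inj_on_delta:
  fixes f :: "wcomp \<Rightarrow> 'k::comm_ring_1 wcqsym"
  assumes delta: "\<And>i j. i \<in> I \<Longrightarrow> j \<in> I \<Longrightarrow> Poly_Mapping.lookup (f i) j = (if i = j then 1 else 0)"
  shows "inj_on f I"
  by (rule inj_onI) (metis delta one_neq_zero)

lemma independent_image_delta: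
  fixes f :: "wcomp \<Rightarrow> 'k::comm_ring_1 wcqsym"
  assumes delta: "\<And>i j. i \<in> I \<Longrightarrow> j \<in> I \<Longrightarrow> Poly_Mapping.lookup (f i) j = (if i = j then 1 else 0)"
  shows "W.independent (f ` I)"
proof (unfold W.independent_explicit_module, intro allI impI)
  fix t u v
  assume t: "finite t" "t \<subseteq> f ` I" and combination: "(\<Sum>v\<in>t. scaleW (u v) v) = 0" and "v \<in> t"
  obtain A where A: "A \<subseteq> I" "t = f ` A" "finite A"
    using t finite_subset_image by metis
  then obtain i where i: "i \<in> A" "v = f i" using \<open>v \<in> t\<close> by blast
  have inj: "inj_on f A" using inj_on_delta[OF delta] A(1) inj_on_subset by blast
  have "(\<Sum>j\<in>A. scaleW (u (f j)) (f j)) = 0"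
    using combination A inj by (simp add: sum.reindex)
  then have "Poly_Mapping.lookup (\<Sum>j\<in>A. scaleW (u (f j)) (f j)) i = 0" by simp
  then show "u v = 0"
    using A i by (subst (asm) lookup_sum_scaleW_delta) (auto simp: delta subsetD)
qed

lemma keys_diff_sum_delta_disjoint:
  fixes f :: "wcomp \<Rightarrow> 'k::comm_ring_1 wcqsym"
  assumes delta: "\<And>i j. i \<in> I \<Longrightarrow> j \<in> I \<Longrightarrow> Poly_Mapping.lookup (f i) j = (if i = j then 1 else 0)"
  shows "Poly_Mapping.keys (p - (\<Sum>i\<in>Poly_Mapping.keys p \<inter> I. scaleW (Poly_Mapping.lookup p i) (f i))) \<inter> I = {}"
proof -
  have "Poly_Mapping.lookup (\<Sum>i\<in>Poly_Mapping.keys p \<inter> I. scaleW (Poly_Mapping.lookup p i) (f i)) j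
      = Poly_Mapping.lookup p j" if "j \<in> I" for j
    using that by (subst lookup_sum_scaleW_delta) (auto simp: delta in_keys_iff)
  then show ?thesis by (auto simp: in_keys_iff lookup_minus)
qed

lemma sum_lookup_scaleW_M: "(\<Sum>\<alpha>\<in>Poly_Mapping.keys p. scaleW (Poly_Mapping.lookup p \<alpha>) (M \<alpha>)) = p"
  by (rule poly_mapping_eqI) (simp add: lookup_sum_scaleW_delta lookup_M in_keys_iff)

lemma phi_eq_sum_superset:
  assumes "finite A" "Poly_Mapping.keys p \<subseteq> A"
  shows "phi p = (\<Sum>\<alpha>\<in>A. scaleW (Poly_Mapping.lookup p \<alpha>) (phiM \<alpha>))"
  unfolding phi_def
  by (rule sum.mono_neutral_left) (use assms in \<open>auto simp: in_keys_iff\<close>)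

lemma module_hom_phi: "module_hom scaleW scaleW (phi :: 'k::comm_ring_1 wcqsym \<Rightarrow> 'k wcqsym)"
proof (unfold module_hom_iff, intro conjI allI)
  fix p q :: "'k wcqsym"
  let ?A = "Poly_Mapping.keys p \<union> Poly_Mapping.keys q"
  have "phi (p + q) = (\<Sum>\<alpha>\<in>?A. scaleW (Poly_Mapping.lookup (p + q) \<alpha>) (phiM \<alpha>))"
    by (rule phi_eq_sum_superset) (auto simp: keys_add)
  then show "phi (p + q) = phi p + phi q"
    by (simp add: phi_eq_sum_superset[of ?A p] phi_eq_sum_superset[of ?A q] lookup_add
        W.scale_left_distrib sum.distrib)
next
  fix c :: 'k and p :: "'k wcqsym"
  have "phi (scaleW c p) = (\<Sum>\<alpha>\<in>Poly_Mapping.keys p. scaleW (Poly_Mapping.lookup (scaleW c p) \<alpha>) (phiM \<alpha>))"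
    by (rule phi_eq_sum_superset) (auto simp: in_keys_iff lookup_scaleW)
  then show "phi (scaleW c p) = scaleW c (phi p)"
    by (simp add: phi_def W.scale_sum_right lookup_scaleW)
qed (fact module_scaleW)+

interpretation phi: module_hom "scaleW :: 'k::comm_ring_1 \<Rightarrow> 'k wcqsym \<Rightarrow> 'k wcqsym" scaleW phi
  by (rule module_hom_phi)

lemma phi_M: "phi (M \<gamma> :: 'k::comm_ring_1 wcqsym) = phiM \<gamma>"
  by (subst phi_eq_sum_superset[of "{\<gamma>}"]) (auto simp: M_def)

lemma bar_in_CN_nat: "bar \<alpha> \<in> CN_nat"
  by (simp add: bar_def CN_nat_def)

lemma C_eps_disjoint_CN_nat: "C_eps \<inter> CN_nat = {}"
  by (auto simp: C_eps_def CN_nat_def neq_Nil_conv)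

lemma ell_eps_CN_nat: "\<alpha> \<in> CN_nat \<Longrightarrow> ell_eps \<alpha> = 0"
  by (auto simp: CN_nat_def ell_eps_def filter_empty_conv)

lemma bar_CN_nat: "\<alpha> \<in> CN_nat \<Longrightarrow> bar \<alpha> = \<alpha>"
  by (auto simp: CN_nat_def bar_def filter_id_conv)

lemma phiM_CN_nat: "\<alpha> \<in> CN_nat \<Longrightarrow> phiM \<alpha> = (M \<alpha> :: 'k::comm_ring_1 wcqsym)"
  using C_eps_disjoint_CN_nat by (auto simp: phiM_def ell_eps_CN_nat bar_CN_nat)

lemma phi_eq_self_if_keys_CN_nat:
  "Poly_Mapping.keys q \<subseteq> CN_nat \<Longrightarrow> phi q = (q :: 'k::comm_ring_1 wcqsym)"
  by (subst (2) sum_lookup_scaleW_M[symmetric])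
     (auto simp: phi_def phiM_CN_nat intro!: sum.cong)

lemma phi_bN:
  assumes "\<alpha> \<in> C_N"
  shows "phi (bN \<alpha> :: 'k::comm_ring_1 wcqsym) = 0"
proof -
  let ?s = "(-1) ^ ell_eps \<alpha> :: 'k"
  have "phi (M \<alpha> :: 'k wcqsym) = scaleW ?s (M (bar \<alpha>))"
    using assms by (simp add: phi_M phiM_def C_N_def)
  moreover have "phi (M (bar \<alpha>) :: 'k wcqsym) = M (bar \<alpha>)"
    by (simp add: phi_M phiM_CN_nat bar_in_CN_nat)
  ultimately show ?thesis
    by (simp add: bN_def phi.diff phi.scale)
qed

definition ker_basis :: "wcomp \<Rightarrow> 'k::comm_ring_1 wcqsym" where
  "ker_basis \<kappa> = (if \<kappa> \<in> C_eps then M \<kappa> else bN \<kappa>)"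

lemma lookup_ker_basis_off_CN_nat:
  assumes "\<kappa> \<notin> CN_nat" "\<xi> \<notin> CN_nat"
  shows "Poly_Mapping.lookup (ker_basis \<kappa> :: 'k::comm_ring_1 wcqsym) \<xi> = (if \<kappa> = \<xi> then 1 else 0)"
  using assms bar_in_CN_nat[of \<kappa>]
  by (auto simp: ker_basis_def bN_def lookup_add lookup_minus lookup_scaleW lookup_M)

lemma B_eps_eq_image_ker_basis: "B_eps = ker_basis ` C_eps"
  by (simp add: B_eps_def ker_basis_def)

lemma B_N_eq_image_ker_basis: "B_N = ker_basis ` (C_N - CN_nat)"
  by (auto simp: B_N_def ker_basis_def C_N_def)

lemma Compl_CN_nat_eq: "- CN_nat = C_eps \<union> (C_N - CN_nat)"
  using C_eps_disjoint_CN_nat by (auto simp: C_N_def)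

lemma phi_ker_basis: "phi (ker_basis \<kappa> :: 'k::comm_ring_1 wcqsym) = 0"
  by (simp add: ker_basis_def phi_M phiM_def phi_bN C_N_def)

lemma span_ker_basis_subset_kernel:
  "W.span (ker_basis ` (- CN_nat)) \<subseteq> {p :: 'k::comm_ring_1 wcqsym. phi p = 0}"
  by (rule W.span_minimal) (auto simp: phi_ker_basis phi.subspace_kernel)

lemma span_ker_basis:
  "W.span (ker_basis ` (- CN_nat)) = {p :: 'k::comm_ring_1 wcqsym. phi p = 0}"
proof
  show "W.span (ker_basis ` (- CN_nat)) \<subseteq> {p :: 'k wcqsym. phi p = 0}"
    by (fact span_ker_basis_subset_kernel)
next
  show "{p :: 'k wcqsym. phi p = 0} \<subseteq> W.span (ker_basis ` (- CN_nat))"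
  proof
    fix p :: "'k wcqsym"
    assume "p \<in> {p. phi p = 0}"
    then have "phi p = 0" by simp
    define s where "s = (\<Sum>\<kappa>\<in>Poly_Mapping.keys p \<inter> - CN_nat.
      scaleW (Poly_Mapping.lookup p \<kappa>) (ker_basis \<kappa> :: 'k wcqsym))"
    have s_span: "s \<in> W.span (ker_basis ` (- CN_nat))"
      unfolding s_def by (intro W.span_sum W.span_scale W.span_base) auto
    have "Poly_Mapping.keys (p - s) \<inter> - CN_nat = {}"
      unfolding s_def by (rule keys_diff_sum_delta_disjoint) (simp add: lookup_ker_basis_off_CN_nat)
    then have "Poly_Mapping.keys (p - s) \<subseteq> CN_nat"
      by blast
    then have "p - s = phi (p - s)"
      by (simp add: phi_eq_self_if_keys_CN_nat)
    also have "\<dots> = 0"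
      using \<open>phi p = 0\<close> s_span span_ker_basis_subset_kernel
      by (auto simp: phi.diff)
    finally show "p \<in> W.span (ker_basis ` (- CN_nat))"
      using s_span by simp
  qed
qed

lemma inj_on_ker_basis: "inj_on (ker_basis :: wcomp \<Rightarrow> 'k::comm_ring_1 wcqsym) (- CN_nat)"
  by (rule inj_on_delta) (simp add: lookup_ker_basis_off_CN_nat)

lemma inj_on_M_C_eps: "inj_on (M :: wcomp \<Rightarrow> 'k::comm_ring_1 wcqsym) C_eps"
proof (rule inj_on_cong[THEN iffD1])
  show "inj_on (ker_basis :: wcomp \<Rightarrow> 'k wcqsym) C_eps"
    using inj_on_ker_basis by (rule inj_on_subset) (simp add: Compl_CN_nat_eq)
qed (simp add: ker_basis_def)

lemma inj_on_bN: "inj_on (bN :: wcomp \<Rightarrow> 'k::comm_ring_1 wcqsym) (C_N - CN_nat)"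
proof (rule inj_on_cong[THEN iffD1])
  show "inj_on (ker_basis :: wcomp \<Rightarrow> 'k wcqsym) (C_N - CN_nat)"
    using inj_on_ker_basis by (rule inj_on_subset) (simp add: Compl_CN_nat_eq)
qed (simp add: ker_basis_def C_N_def)

lemma B_eps_Int_B_N: "(B_eps :: 'k::comm_ring_1 wcqsym set) \<inter> B_N = {}"
proof -
  have "C_eps \<inter> (C_N - CN_nat) = {}"
    by (auto simp: C_N_def)
  then show ?thesis
    using inj_on_image_Int[OF inj_on_ker_basis[where 'k = 'k], of C_eps "C_N - CN_nat"]
    by (simp add: B_eps_eq_image_ker_basis B_N_eq_image_ker_basis Compl_CN_nat_eq)
qed

lemma B_eps_Un_B_N: "B_eps \<union> B_N = (ker_basis ` (- CN_nat) :: 'k::comm_ring_1 wcqsym set)"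
  by (simp add: B_eps_eq_image_ker_basis B_N_eq_image_ker_basis Compl_CN_nat_eq image_Un)

theorem theorem3p9:
  fixes dummy :: "'k::comm_ring_1"
  assumes Q_sub_k: "\<And>n::nat. n > 0 \<Longrightarrow> \<exists>r::'k. of_nat n * r = 1"
  shows "inj_on (M :: wcomp \<Rightarrow> 'k wcqsym) C_eps
       \<and> inj_on (bN :: wcomp \<Rightarrow> 'k wcqsym) (C_N - CN_nat)
       \<and> (B_eps :: 'k wcqsym set) \<inter> B_N = {}
       \<and> module.independent scaleW (B_eps \<union> (B_N :: 'k wcqsym set))
       \<and> module.span scaleW (B_eps \<union> (B_N :: 'k wcqsym set)) = {p. phi p = 0}"
  \<comment> \<open>The argument works over any commutative ring.\<close>
proof -
  have "W.independent (B_eps \<union> (B_N :: 'k wcqsym set))"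
    unfolding B_eps_Un_B_N
    by (rule independent_image_delta) (simp add: lookup_ker_basis_off_CN_nat)
  then show ?thesis
    by (simp add: inj_on_M_C_eps inj_on_bN B_eps_Int_B_N B_eps_Un_B_N span_ker_basis)
qed

end
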